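(* A model of $\mathsf{Md}_\bot$ satisfies the inverse cancellation law $\mathsf{ICL}$ if and only if it satisfies the Common Inverse Law $\mathsf{CIL}$.
   Context: The signature has one sort, constants $0,1,\bot$, binary operations $+,\cdot$ and unary operations $-$ and $(\,\cdot\,)^{-1}$. $\mathsf{Md}_\bot$ is the set of equations (variables universally quantified): $(x+y)+z=x+(y+z)$; $x+y=y+x$; $x+0=x$; $x+(-x)=0\cdot x$; $(x\cdot y)\cdot z=x\cdot(y\cdot z)$; $x\cdot y=y\cdot x$; $1\cdot x=x$; $x\cdot(y+z)=x\cdot y+x\cdot z$; $-(-x)=x$; $0\cdot(x\cdot x)=0\cdot x$; $(x^{-1})^{-1}=x+0\cdot x^{-1}$; $x\cdot x^{-1}=1+0\cdot x^{-1}$; $(x\cdot y)^{-1}=x^{-1}\cdot y^{-1}$; $1^{-1}=1$; $0^{-1}=\bot$; $x+\bot=\bot$; $x\cdot\bot=\bot$. $\mathsf{ICL}$: $\forall x,y,z\,((x\neq 0\wedge x\neq\bot\wedge x^{-1}\cdot y=x^{-1}\cdot z)\rightarrow y=z)$. $\mathsf{CIL}$: $\forall x\,(x\neq 0\wedge x\neq\bot\rightarrow x\cdot x^{-1}=1)$. *)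

theory Defs
  imports Main
begin

definition Md_bot ::
  "'a \<Rightarrow> 'a \<Rightarrow> 'a \<Rightarrow> ('a \<Rightarrow> 'a \<Rightarrow> 'a) \<Rightarrow> ('a \<Rightarrow> 'a \<Rightarrow> 'a) \<Rightarrow> ('a \<Rightarrow> 'a) \<Rightarrow> ('a \<Rightarrow> 'a) \<Rightarrow> bool"
where
  "Md_bot zr on bt ad mu ng iv \<longleftrightarrow>
     (\<forall>x y w. ad (ad x y) w = ad x (ad y w)) \<and>
     (\<forall>x y. ad x y = ad y x) \<and>
     (\<forall>x. ad x zr = x) \<and>
     (\<forall>x. ad x (ng x) = mu zr x) \<and>
     (\<forall>x y w. mu (mu x y) w = mu x (mu y w)) \<and>
     (\<forall>x y. mu x y = mu y x) \<and>
     (\<forall>x. mu on x = x) \<and>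
     (\<forall>x y w. mu x (ad y w) = ad (mu x y) (mu x w)) \<and>
     (\<forall>x. ng (ng x) = x) \<and>
     (\<forall>x. mu zr (mu x x) = mu zr x) \<and>
     (\<forall>x. iv (iv x) = ad x (mu zr (iv x))) \<and>
     (\<forall>x. mu x (iv x) = ad on (mu zr (iv x))) \<and>
     (\<forall>x y. iv (mu x y) = mu (iv x) (iv y)) \<and>
     iv on = on \<and>
     iv zr = bt \<and>
     (\<forall>x. ad x bt = bt) \<and>
     (\<forall>x. mu x bt = bt)"

definition ICL ::
  "'a \<Rightarrow> 'a \<Rightarrow> 'a \<Rightarrow> ('a \<Rightarrow> 'a \<Rightarrow> 'a) \<Rightarrow> ('a \<Rightarrow> 'a \<Rightarrow> 'a) \<Rightarrow> ('a \<Rightarrow> 'a) \<Rightarrow> ('a \<Rightarrow> 'a) \<Rightarrow> bool"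
where
  "ICL zr on bt ad mu ng iv \<longleftrightarrow>
     (\<forall>x y w. (x \<noteq> zr \<and> x \<noteq> bt \<and> mu (iv x) y = mu (iv x) w) \<longrightarrow> y = w)"

definition CIL ::
  "'a \<Rightarrow> 'a \<Rightarrow> 'a \<Rightarrow> ('a \<Rightarrow> 'a \<Rightarrow> 'a) \<Rightarrow> ('a \<Rightarrow> 'a \<Rightarrow> 'a) \<Rightarrow> ('a \<Rightarrow> 'a) \<Rightarrow> ('a \<Rightarrow> 'a) \<Rightarrow> bool"
where
  "CIL zr on bt ad mu ng iv \<longleftrightarrow>
     (\<forall>x. (x \<noteq> zr \<and> x \<noteq> bt) \<longrightarrow> mu x (iv x) = on)"

end

theory Submission
  imports Defs
begin

text \<open>In any model, \<open>x\<^sup>-\<^sup>1 \<cdot> (x \<cdot> x\<^sup>-\<^sup>1) = x\<^sup>-\<^sup>1 \<cdot> 1\<close>: expanding \<open>x \<cdot> x\<^sup>-\<^sup>1 = 1 + 0 \<cdot> x\<^sup>-\<^sup>1\<close>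
  leaves the term \<open>0 \<cdot> x\<^sup>-\<^sup>1 \<cdot> x\<^sup>-\<^sup>1 = 0 \<cdot> x\<^sup>-\<^sup>1\<close>, which \<open>x\<^sup>-\<^sup>1\<close> absorbs. Hence ICL cancels
  \<open>x\<^sup>-\<^sup>1\<close> and yields CIL. Conversely, CIL makes \<open>x\<close> a left inverse of \<open>x\<^sup>-\<^sup>1\<close>, which gives ICL.\<close>

lemma Md_bot_add_mult_zero:
  assumes "Md_bot zr on bt ad mu ng iv"
  shows "ad y (mu zr y) = y"
proof -
  have mC: "\<And>x y. mu x y = mu y x" and m1: "\<And>x. mu on x = x"
    and dis: "\<And>x y w. mu x (ad y w) = ad (mu x y) (mu x w)"
    and a0: "\<And>x. ad x zr = x"
    using assms unfolding Md_bot_def by blast+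
  have "ad y (mu zr y) = ad (mu y on) (mu y zr)" using mC m1 by metis
  also have "\<dots> = mu y (ad on zr)" using dis by metis
  also have "\<dots> = y" using a0 mC m1 by metis
  finally show ?thesis .
qed

lemma Md_bot_inverse_mult_common_inverse:
  assumes "Md_bot zr on bt ad mu ng iv"
  shows "mu (iv x) (mu x (iv x)) = mu (iv x) on"
proof -
  have mA: "\<And>x y w. mu (mu x y) w = mu x (mu y w)"
    and mC: "\<And>x y. mu x y = mu y x" and m1: "\<And>x. mu on x = x"
    and dis: "\<And>x y w. mu x (ad y w) = ad (mu x y) (mu x w)"
    and z2: "\<And>x. mu zr (mu x x) = mu zr x"
    and inv: "\<And>x. mu x (iv x) = ad on (mu zr (iv x))"
    using assms unfolding Md_bot_def by blast+
  have "mu (iv x) (mu x (iv x)) = ad (mu (iv x) on) (mu (iv x) (mu zr (iv x)))"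
    using inv dis by metis
  also have "\<dots> = ad (iv x) (mu zr (mu (iv x) (iv x)))" using mC m1 mA by metis
  also have "\<dots> = ad (iv x) (mu zr (iv x))" using z2 by metis
  also have "\<dots> = mu (iv x) on"
    using Md_bot_add_mult_zero[OF assms] mC m1 by metis
  finally show ?thesis .
qed

lemma ICL_imp_CIL:
  assumes "Md_bot zr on bt ad mu ng iv" and "ICL zr on bt ad mu ng iv"
  shows "CIL zr on bt ad mu ng iv"
  using Md_bot_inverse_mult_common_inverse[OF assms(1)] assms(2)
  unfolding ICL_def CIL_def by blast

lemma CIL_imp_ICL:
  assumes mA: "\<And>x y w. mu (mu x y) w = mu x (mu y w)"
    and m1: "\<And>x. mu on x = x"
    and "CIL zr on bt ad mu ng iv"
  shows "ICL zr on bt ad mu ng iv"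
  unfolding ICL_def
proof (intro allI impI)
  fix x y w
  assume h: "x \<noteq> zr \<and> x \<noteq> bt \<and> mu (iv x) y = mu (iv x) w"
  then have "mu x (iv x) = on" using assms(3) unfolding CIL_def by blast
  moreover have "mu x (mu (iv x) y) = mu x (mu (iv x) w)" using h by simp
  ultimately show "y = w" using mA m1 by metis
qed

theorem mainTheorem9:
  fixes zr on bt :: 'a and ad mu :: "'a \<Rightarrow> 'a \<Rightarrow> 'a" and ng iv :: "'a \<Rightarrow> 'a"
  assumes "Md_bot zr on bt ad mu ng iv"
  shows "ICL zr on bt ad mu ng iv \<longleftrightarrow> CIL zr on bt ad mu ng iv"
proof
  show "ICL zr on bt ad mu ng iv \<Longrightarrow> CIL zr on bt ad mu ng iv"
    using ICL_imp_CIL[OF assms] .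
  have "\<And>x y w. mu (mu x y) w = mu x (mu y w)" and "\<And>x. mu on x = x"
    using assms unfolding Md_bot_def by blast+
  then show "CIL zr on bt ad mu ng iv \<Longrightarrow> ICL zr on bt ad mu ng iv"
    using CIL_imp_ICL by metis
qed

end
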